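(* Let $\Omega=C_0(\mathbb{R}_+,\mathbb{R}^d)$ with the metric \[D(\omega,\omega')=\sum_{n=1}^{\infty}\frac{1}{2^n}\,\frac{\sup_{0\le t\le n}|\omega(t)-\omega'(t)|}{1+\sup_{0\le t\le n}|\omega(t)-\omega'(t)|},\] and let $\theta_t$ be the shift on $\Omega$, $\theta_t(\omega)(s)=\omega(t+s)-\omega(t)$. For $h>0$ define $\phi_P^{(h)}:\Omega\to(\mathbb{R}^d)^{\mathbb{N}^*}$, $\phi_P^{(h)}(\omega)=(\omega(nh)-\omega((n-1)h))_{n\ge1}$; $\phi_I^{(h)}:(\mathbb{R}^d)^{\mathbb{N}^*}\to\Omega$, $\phi_I^{(h)}(y)(t)=\sum_{n=0}^{\lfloor t/h\rfloor}y_n+\frac{t-\lfloor t/h\rfloor h}{h}y_{\lfloor t/h\rfloor+1}$ (with $y_0:=0$); and the sequence shift $\theta^{(h)}((y_n)_{n\ge1})=(y_{n+1})_{n\ge1}$. For $t\ge0$ define $\overline{\theta}^{(h)}_t:\Omega\to\Omega$ by \[\overline{\theta}^{(h)}_t(\omega)=\frac{(\lfloor t/h\rfloor+1)h-t}{h}\,\phi_I^{(h)}\circ(\theta^{(h)})^{\lfloor t/h\rfloor}\circ\phi_P^{(h)}(\omega)+\frac{t-\lfloor t/h\rfloor h}{h}\,\phi_I^{(h)}\circ(\theta^{(h)})^{\lfloor t/h\rfloor+1}\circ\phi_P^{(h)}(\omega).\] Then for every $\omega\in\Omega$ and every $t\in\mathbb{R}_+$, \[\lim_{h\to0}D\big(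\theta_t(\omega),\overline{\theta}^{(h)}_t(\omega)\big)=0.\]
   Context: $|\cdot|$ is the Euclidean norm on $\mathbb{R}^d$; $(\theta^{(h)})^0$ is the identity. $\overline{\theta}^{(h)}_t$ is the second (environment) component of the time-interpolated embedding in $\mathbb{R}^m\times\Omega$ of a discrete-time repeated-interaction dynamical system with time step $h$. *)

theory Defs
  imports "HOL-Analysis.Analysis"
begin

text \<open>Paths \<omega> : R_+ \<rightarrow> R^d are represented as functions real \<Rightarrow> real^'d; only
  the values on [0,\<infinity>) matter.  The path space \<Omega> = C_0(R_+, R^d).\<close>

definition Omega :: "(real \<Rightarrow> real^'d) set" where
  "Omega = {\<omega>. continuous_on {0..} \<omega> \<and> \<omega> 0 = 0}"

definition supdist :: "nat \<Rightarrow> (real \<Rightarrow> real^'d) \<Rightarrow> (real \<Rightarrow> real^'d) \<Rightarrow> real" where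
  "supdist n \<omega> \<omega>' = (SUP t\<in>{0..real n}. norm (\<omega> t - \<omega>' t))"

definition D :: "(real \<Rightarrow> real^'d) \<Rightarrow> (real \<Rightarrow> real^'d) \<Rightarrow> real" where
  "D \<omega> \<omega>' = (\<Sum>n. (1 / 2 ^ (Suc n)) *
      (supdist (Suc n) \<omega> \<omega>' / (1 + supdist (Suc n) \<omega> \<omega>')))"

definition shift :: "real \<Rightarrow> (real \<Rightarrow> real^'d) \<Rightarrow> (real \<Rightarrow> real^'d)" where
  "shift t \<omega> = (\<lambda>s. \<omega> (t + s) - \<omega> t)"

text \<open>Sequences (y_n)_{n \<ge> 1} are represented as nat \<Rightarrow> real^'d; index 0 is unused
  (the convention y_0 = 0 is built into phiI).\<close>
definition phiP :: "real \<Rightarrow> (real \<Rightarrow> real^'d) \<Rightarrow> (nat \<Rightarrow> real^'d)" where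
  "phiP h \<omega> = (\<lambda>n. if n = 0 then 0 else \<omega> (real n * h) - \<omega> ((real n - 1) * h))"

definition phiI :: "real \<Rightarrow> (nat \<Rightarrow> real^'d) \<Rightarrow> (real \<Rightarrow> real^'d)" where
  "phiI h y = (\<lambda>t. let k = nat \<lfloor>t / h\<rfloor> in
      (\<Sum>n\<in>{1..k}. y n) + ((t - real k * h) / h) *\<^sub>R y (k + 1))"

definition seqshift :: "(nat \<Rightarrow> real^'d) \<Rightarrow> (nat \<Rightarrow> real^'d)" where
  "seqshift y = (\<lambda>n. y (n + 1))"

definition shift_bar :: "real \<Rightarrow> real \<Rightarrow> (real \<Rightarrow> real^'d) \<Rightarrow> (real \<Rightarrow> real^'d)" where
  "shift_bar h t \<omega> = (let k = nat \<lfloor>t / h\<rfloor> in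
      (\<lambda>s. (((real k + 1) * h - t) / h) *\<^sub>R phiI h ((seqshift ^^ k) (phiP h \<omega>)) s
         + ((t - real k * h) / h) *\<^sub>R phiI h ((seqshift ^^ (k + 1)) (phiP h \<omega>)) s))"

end

theory Submission
  imports Defs
begin

text \<open>For fixed \<open>s\<close>, the value \<open>shift_bar h t \<omega> s\<close> is a convex combination of the grid
  increments \<open>\<omega> (k'h + j'h) - \<omega> (k'h)\<close> with \<open>|k'h - t| \<le> h\<close> and \<open>|j'h - s| \<le> h\<close>, each of which
  differs from \<open>\<omega> (t + s) - \<omega> t\<close> by at most twice the modulus of continuity of \<omega> at scale \<open>2h\<close>.
  Uniform continuity of \<omega> on compacts therefore makes the error uniformly small on every \<open>[0, T]\<close>
  as \<open>h \<rightarrow> 0\<close>, and since the terms of \<open>D\<close> beyond index \<open>N\<close> contribute at most \<open>2^-N\<close>, uniform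
  smallness on \<open>[0, N]\<close> suffices.\<close>

lemma funpow_seqshift: "(seqshift ^^ k) y n = y (n + k)"
  by (induction k arbitrary: n) (simp_all add: seqshift_def)

lemma sum_phiP_shifted:
  "(\<Sum>n\<in>{1..j}. phiP h \<omega> (n + k)) = \<omega> (real (j + k) * h) - \<omega> (real k * h)"
  by (induction j) (simp_all add: phiP_def algebra_simps)

lemma phiI_seqshift_phiP:
  "phiI h ((seqshift ^^ k) (phiP h \<omega>)) s =
    (let j = nat \<lfloor>s / h\<rfloor>; f = (s - real j * h) / h in
      (1 - f) *\<^sub>R shift (real k * h) \<omega> (real j * h) + f *\<^sub>R shift (real k * h) \<omega> (real (j + 1) * h))"
proof -
  have "phiP h \<omega> (j + 1 + k) = \<omega> (real (j + k + 1) * h) - \<omega> (real (j + k) * h)" for j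
    by (simp add: phiP_def algebra_simps)
  then have "phiI h ((seqshift ^^ k) (phiP h \<omega>)) s =
    (let j = nat \<lfloor>s / h\<rfloor>; f = (s - real j * h) / h in
      \<omega> (real (j + k) * h) - \<omega> (real k * h) + f *\<^sub>R (\<omega> (real (j + k + 1) * h) - \<omega> (real (j + k) * h)))"
    unfolding phiI_def Let_def funpow_seqshift sum_phiP_shifted by simp
  then show ?thesis
    by (simp add: Let_def shift_def algebra_simps)
qed

lemma norm_shift_sub_shift_le:
  fixes \<omega> :: "real \<Rightarrow> real^'d"
  assumes "norm (\<omega> (t + s) - \<omega> (u + v)) \<le> d" "norm (\<omega> u - \<omega> t) \<le> d"
  shows "norm (shift t \<omega> s - shift u \<omega> v) \<le> 2 * d"
proof -
  have "shift t \<omega> s - shift u \<omega> v = (\<omega> (t + s) - \<omega> (u + v)) + (\<omega> u - \<omega> t)"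
    by (simp add: shift_def algebra_simps)
  then show ?thesis
    using norm_triangle_le[of "\<omega> (t + s) - \<omega> (u + v)" "\<omega> u - \<omega> t" "2 * d"] assms by simp
qed

lemma norm_shift_sub_shift_bar_le:
  fixes \<omega> :: "real \<Rightarrow> real^'d"
  assumes h: "h > 0" and s: "s \<ge> 0" and t: "t \<ge> 0"
    and modulus: "\<And>p q. 0 \<le> p \<Longrightarrow> p \<le> t + s + 2 * h \<Longrightarrow> 0 \<le> q \<Longrightarrow> q \<le> t + s + 2 * h \<Longrightarrow>
        \<bar>p - q\<bar> \<le> 2 * h \<Longrightarrow> norm (\<omega> p - \<omega> q) \<le> d"
  shows "norm (shift t \<omega> s - shift_bar h t \<omega> s) \<le> 2 * d"
proof -
  define k where "k = nat \<lfloor>t / h\<rfloor>"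
  define j where "j = nat \<lfloor>s / h\<rfloor>"
  define f where "f = (s - real j * h) / h"
  have k: "real k * h \<le> t" "t < real k * h + h"
    using h t floor_divide_lower[OF h, of t] floor_divide_upper[OF h, of t]
    by (auto simp: k_def algebra_simps)
  have j: "real j * h \<le> s" "s < real j * h + h"
    using h s floor_divide_lower[OF h, of s] floor_divide_upper[OF h, of s]
    by (auto simp: j_def algebra_simps)
  let ?B = "cball (shift t \<omega> s) (2 * d)"
  have node: "shift (real k' * h) \<omega> (real j' * h) \<in> ?B"
    if "k' \<in> {k, k + 1}" "j' \<in> {j, j + 1}" for k' j'
  proof -
    have "0 \<le> real k' * h" "0 \<le> real j' * h" "real k' * h \<le> t + h" "real j' * h \<le> s + h"
      "t \<le> real k' * h + h" "s \<le> real j' * h + h"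
      using that k j h by (auto simp: algebra_simps)
    then have "norm (\<omega> (t + s) - \<omega> (real k' * h + real j' * h)) \<le> d"
      "norm (\<omega> (real k' * h) - \<omega> t) \<le> d"
      using h s t by (auto intro!: modulus)
    then show ?thesis
      using norm_shift_sub_shift_le by (simp add: dist_norm)
  qed
  have f: "0 \<le> f" "f \<le> 1"
    using j h by (auto simp: f_def field_simps)
  have interp: "(1 - f) *\<^sub>R shift (real k' * h) \<omega> (real j * h)
      + f *\<^sub>R shift (real k' * h) \<omega> (real (j + 1) * h) \<in> ?B" if "k' \<in> {k, k + 1}" for k'
    using f that by (intro convexD[OF convex_cball] node) auto
  have "shift_bar h t \<omega> s \<in> ?B"
    unfolding shift_bar_def phiI_seqshift_phiP Let_def
    unfolding k_def[symmetric] j_def[symmetric] f_def[symmetric]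
    by (intro convexD[OF convex_cball] interp) (use k h in \<open>auto simp: field_simps\<close>)
  then show ?thesis
    by (simp add: dist_norm)
qed

lemma supdist_nonneg:
  assumes "bdd_above ((\<lambda>s. norm (x s - y s)) ` {0..real n})"
  shows "0 \<le> supdist n x y"
  unfolding supdist_def using assms by (rule cSUP_upper2[where x = 0]) auto

lemma supdist_le:
  assumes "\<And>s. s \<in> {0..real n} \<Longrightarrow> norm (x s - y s) \<le> e"
  shows "supdist n x y \<le> e"
  unfolding supdist_def using assms by (intro cSUP_least) auto

definition D_term :: "nat \<Rightarrow> (real \<Rightarrow> real^'d) \<Rightarrow> (real \<Rightarrow> real^'d) \<Rightarrow> real" where
  "D_term n x y = (1/2) ^ Suc n * (supdist (Suc n) x y / (1 + supdist (Suc n) x y))"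

lemma D_eq_suminf_D_term: "D x y = (\<Sum>n. D_term n x y)"
  by (simp add: D_def D_term_def power_one_over)

lemma D_term_bounds:
  assumes "0 \<le> supdist (Suc n) x y"
  shows "0 \<le> D_term n x y" "D_term n x y \<le> (1/2) ^ Suc n"
    "D_term n x y \<le> (1/2) ^ Suc n * supdist (Suc n) x y"
proof -
  let ?r = "supdist (Suc n) x y"
  have ratio: "0 \<le> ?r / (1 + ?r)" "?r / (1 + ?r) \<le> 1" "?r / (1 + ?r) \<le> ?r"
    using assms by (simp_all add: divide_le_eq algebra_simps)
  show "0 \<le> D_term n x y"
    unfolding D_term_def using ratio by simp
  show "D_term n x y \<le> (1/2) ^ Suc n"
    unfolding D_term_def by (rule mult_left_le) (use ratio in simp_all)
  show "D_term n x y \<le> (1/2) ^ Suc n * ?r"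
    unfolding D_term_def by (rule mult_left_mono) (use ratio in simp_all)
qed

lemma summable_D_term:
  assumes "\<And>n. 0 \<le> supdist n x y"
  shows "summable (\<lambda>n. D_term n x y)"
  by (rule summable_comparison_test[OF _ sums_summable[OF power_half_series]])
    (use D_term_bounds(1,2)[OF assms] in auto)

lemma D_nonneg:
  assumes "\<And>n. 0 \<le> supdist n x y"
  shows "0 \<le> D x y"
  unfolding D_eq_suminf_D_term
  using summable_D_term[OF assms] D_term_bounds(1)[OF assms] by (rule suminf_nonneg)

lemma D_le:
  assumes nonneg: "\<And>n. 0 \<le> supdist n x y" and close: "\<And>n. n \<le> N \<Longrightarrow> supdist n x y \<le> e"
  shows "D x y \<le> e + (1/2) ^ N"
proof -
  define tail where "tail n = (if N \<le> n then (1/2::real) ^ Suc n else 0)" for n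
  have "(\<lambda>i. tail (i + N)) sums ((1/2) ^ N * 1)"
    unfolding tail_def using sums_mult[OF power_half_series, of "(1/2) ^ N"]
    by (simp add: power_add mult.commute)
  then have tail_sums: "tail sums (1/2) ^ N"
    by (subst (asm) sums_zero_iff_shift) (auto simp: tail_def)
  have bound_sums: "(\<lambda>n. e * (1/2) ^ Suc n + tail n) sums (e + (1/2) ^ N)"
    using sums_add[OF sums_mult[OF power_half_series, of e] tail_sums] by simp
  have "0 \<le> e" using close[of 0] nonneg[of 0] by simp
  have term_le: "D_term n x y \<le> e * (1/2) ^ Suc n + tail n" for n
  proof (cases "N \<le> n")
    case True
    then have "tail n = (1/2) ^ Suc n"
      by (simp add: tail_def)
    moreover have "0 \<le> e * (1/2) ^ Suc n"
      using \<open>0 \<le> e\<close> by simp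
    ultimately show ?thesis
      using D_term_bounds(2)[OF nonneg, of n] by linarith
  next
    case False
    have "(1/2) ^ Suc n * supdist (Suc n) x y \<le> e * (1/2) ^ Suc n"
      using False close[of "Suc n"] by (subst mult.commute, intro mult_left_mono) simp_all
    moreover have "tail n = 0"
      using False by (simp add: tail_def)
    ultimately show ?thesis
      using D_term_bounds(3)[OF nonneg, of n] by linarith
  qed
  show ?thesis
    unfolding D_eq_suminf_D_term sums_unique[OF bound_sums]
    using term_le summable_D_term[OF nonneg] sums_summable[OF bound_sums]
    by (rule suminf_le)
qed

text \<open>Boundedness on every \<open>[0, n]\<close> is needed only because \<open>supdist\<close> of an unbounded set is an
  unspecified real.\<close>

lemma tendsto_D_zeroI:
  fixes x y :: "'a \<Rightarrow> real \<Rightarrow> real^'d"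
  assumes bounded: "\<forall>\<^sub>F h in F. \<forall>n. bdd_above ((\<lambda>s. norm (x h s - y h s)) ` {0..real n})"
    and uniform: "\<And>T e. e > 0 \<Longrightarrow> \<forall>\<^sub>F h in F. \<forall>s\<in>{0..T}. norm (x h s - y h s) \<le> e"
  shows "((\<lambda>h. D (x h) (y h)) \<longlongrightarrow> 0) F"
proof (rule tendstoI)
  fix \<epsilon> :: real
  assume "\<epsilon> > 0"
  then obtain N where N: "(1/2::real) ^ N < \<epsilon> / 2"
    using real_arch_pow_inv[of "\<epsilon> / 2" "1/2"] by auto
  have "\<forall>\<^sub>F h in F. (\<forall>n. bdd_above ((\<lambda>s. norm (x h s - y h s)) ` {0..real n}))
      \<and> (\<forall>s\<in>{0..real N}. norm (x h s - y h s) \<le> \<epsilon> / 4)"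
    by (rule eventually_conj[OF bounded uniform]) (use \<open>\<epsilon> > 0\<close> in simp)
  then show "\<forall>\<^sub>F h in F. dist (D (x h) (y h)) 0 < \<epsilon>"
  proof (rule eventually_mono, elim conjE)
    fix h
    assume "\<forall>n. bdd_above ((\<lambda>s. norm (x h s - y h s)) ` {0..real n})"
      and close: "\<forall>s\<in>{0..real N}. norm (x h s - y h s) \<le> \<epsilon> / 4"
    then have nonneg: "0 \<le> supdist n (x h) (y h)" for n
      by (intro supdist_nonneg) auto
    have "supdist n (x h) (y h) \<le> \<epsilon> / 4" if "n \<le> N" for n
      using close that by (intro supdist_le) auto
    then have "D (x h) (y h) \<le> \<epsilon> / 4 + (1/2) ^ N"
      by (rule D_le[OF nonneg])
    then show "dist (D (x h) (y h)) 0 < \<epsilon>"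
      using D_nonneg[OF nonneg] N \<open>\<epsilon> > 0\<close> by (simp add: dist_real_def)
  qed
qed

lemma eventually_bounded_shift_bar_error:
  fixes \<omega> :: "real \<Rightarrow> real^'d"
  assumes "\<omega> \<in> Omega" and t: "t \<ge> 0"
  shows "\<forall>\<^sub>F h in at_right 0.
    \<forall>n. bdd_above ((\<lambda>s. norm (shift t \<omega> s - shift_bar h t \<omega> s)) ` {0..real n})"
  unfolding eventually_at_right_field
proof (intro exI[of _ 1] conjI allI impI)
  fix h :: real and n :: nat
  assume h: "0 < h" "h < 1"
  have "continuous_on {0..t + real n + 2} \<omega>"
    using assms by (auto simp: Omega_def elim: continuous_on_subset)
  then have "compact (\<omega> ` {0..t + real n + 2})"
    by (rule compact_continuous_image) simp
  then obtain M where M: "\<And>p. p \<in> {0..t + real n + 2} \<Longrightarrow> norm (\<omega> p) \<le> M"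
    by (meson compact_imp_bounded bounded_iff imageI)
  have "norm (shift t \<omega> s - shift_bar h t \<omega> s) \<le> 2 * (2 * M)" if "s \<in> {0..real n}" for s
  proof (rule norm_shift_sub_shift_bar_le)
    fix p q
    assume "0 \<le> p" "p \<le> t + s + 2 * h" "0 \<le> q" "q \<le> t + s + 2 * h"
    then have "norm (\<omega> p) \<le> M" "norm (\<omega> q) \<le> M"
      using that h by (auto intro!: M)
    then show "norm (\<omega> p - \<omega> q) \<le> 2 * M"
      using norm_triangle_ineq4[of "\<omega> p" "\<omega> q"] by linarith
  qed (use h that t in auto)
  then show "bdd_above ((\<lambda>s. norm (shift t \<omega> s - shift_bar h t \<omega> s)) ` {0..real n})"
    by (intro bdd_aboveI2) auto
qed simp

lemma eventually_uniform_shift_bar_error: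
  fixes \<omega> :: "real \<Rightarrow> real^'d"
  assumes "\<omega> \<in> Omega" and t: "t \<ge> 0" and e: "e > 0"
  shows "\<forall>\<^sub>F h in at_right 0. \<forall>s\<in>{0..T}. norm (shift t \<omega> s - shift_bar h t \<omega> s) \<le> e"
proof -
  have "continuous_on {0..t + T + 2} \<omega>"
    using assms by (auto simp: Omega_def elim: continuous_on_subset)
  then have "uniformly_continuous_on {0..t + T + 2} \<omega>"
    by (rule compact_uniformly_continuous) simp
  then obtain \<delta> where "\<delta> > 0" and \<delta>: "\<And>p q. p \<in> {0..t + T + 2} \<Longrightarrow> q \<in> {0..t + T + 2} \<Longrightarrow>
      dist q p < \<delta> \<Longrightarrow> dist (\<omega> q) (\<omega> p) < e / 2"
    unfolding uniformly_continuous_on_def using e by (meson half_gt_zero)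
  show ?thesis
    unfolding eventually_at_right_field
  proof (intro exI[of _ "min 1 (\<delta> / 3)"] conjI allI impI ballI)
    fix h s
    assume h: "0 < h" "h < min 1 (\<delta> / 3)" and s: "s \<in> {0..T}"
    have "norm (shift t \<omega> s - shift_bar h t \<omega> s) \<le> 2 * (e / 2)"
    proof (rule norm_shift_sub_shift_bar_le)
      fix p q
      assume "0 \<le> p" "p \<le> t + s + 2 * h" "0 \<le> q" "q \<le> t + s + 2 * h" "\<bar>p - q\<bar> \<le> 2 * h"
      then have "dist (\<omega> q) (\<omega> p) < e / 2"
        using h s by (intro \<delta>) (auto simp: dist_real_def)
      then show "norm (\<omega> p - \<omega> q) \<le> e / 2"
        by (simp add: dist_norm norm_minus_commute)
    qed (use h s t in auto)
    then show "norm (shift t \<omega> s - shift_bar h t \<omega> s) \<le> e"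
      by simp
  qed (use \<open>\<delta> > 0\<close> in simp)
qed

theorem theorem5p1:
  fixes \<omega> :: "real \<Rightarrow> real^'d" and t :: real
  assumes "\<omega> \<in> Omega" and "t \<ge> 0"
  shows "((\<lambda>h. D (shift t \<omega>) (shift_bar h t \<omega>)) \<longlongrightarrow> 0) (at_right 0)"
  using eventually_bounded_shift_bar_error[OF assms] eventually_uniform_shift_bar_error[OF assms]
  by (rule tendsto_D_zeroI)

end
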